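(* For every integer $p\ge 3$, $${\rm gp}(S_p^2)=\begin{cases}\frac{(p+1)^2}{4}, & p\text{ odd},\\ \frac{p(p+2)}{4}, & p\text{ even},\end{cases}\qquad \#{\rm gp}(S_p^2)=\begin{cases}\binom{p}{(p+1)/2}, & p\text{ odd},\\ \binom{p+1}{(p+2)/2}, & p\text{ even}.\end{cases}$$
   Context: For $p\ge3$, $n\ge1$, the Sierpiński graph $S_p^n$ has vertex set $\{0,1,\dots,p-1\}^n$, a vertex written $i_1\cdots i_n$; vertices $i_1\cdots i_n$ and $j_1\cdots j_n$ are adjacent iff there is $h$ with $i_t=j_t$ for $t<h$, $i_h\ne j_h$, and $i_t=j_h$, $j_t=i_h$ for $t>h$. For $X\subseteq V(G)$, vertices $u,v$ are $X$-positionable if every shortest $u,v$-path $P$ satisfies $V(P)\cap X\subseteq\{u,v\}$; $X$ is a general position set if every two vertices of $X$ are $X$-positionable; ${\rm gp}(G)$ is the maximum size of a general position set and $\#{\rm gp}(G)$ the number of general position sets of that size. *)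

theory Defs
  imports Main "HOL-Library.FuncSet"
begin

definition is_walk :: "'a set \<Rightarrow> ('a \<Rightarrow> 'a \<Rightarrow> bool) \<Rightarrow> 'a list \<Rightarrow> bool" where
  "is_walk V E P \<longleftrightarrow> P \<noteq> [] \<and> set P \<subseteq> V \<and> (\<forall>i. Suc i < length P \<longrightarrow> E (P ! i) (P ! Suc i))"

definition is_uv_walk :: "'a set \<Rightarrow> ('a \<Rightarrow> 'a \<Rightarrow> bool) \<Rightarrow> 'a \<Rightarrow> 'a \<Rightarrow> 'a list \<Rightarrow> bool" where
  "is_uv_walk V E u v P \<longleftrightarrow> is_walk V E P \<and> hd P = u \<and> last P = v"

(* shortest u,v-path: a u,v-walk of minimum length (such walks are automatically paths) *)
definition is_shortest_path :: "'a set \<Rightarrow> ('a \<Rightarrow> 'a \<Rightarrow> bool) \<Rightarrow> 'a \<Rightarrow> 'a \<Rightarrow> 'a list \<Rightarrow> bool" where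
  "is_shortest_path V E u v P \<longleftrightarrow> is_uv_walk V E u v P \<and>
     (\<forall>Q. is_uv_walk V E u v Q \<longrightarrow> length P \<le> length Q)"

definition positionable :: "'a set \<Rightarrow> ('a \<Rightarrow> 'a \<Rightarrow> bool) \<Rightarrow> 'a set \<Rightarrow> 'a \<Rightarrow> 'a \<Rightarrow> bool" where
  "positionable V E X u v \<longleftrightarrow>
     (\<forall>P. is_shortest_path V E u v P \<longrightarrow> set P \<inter> X \<subseteq> {u, v})"

definition gp_set :: "'a set \<Rightarrow> ('a \<Rightarrow> 'a \<Rightarrow> bool) \<Rightarrow> 'a set \<Rightarrow> bool" where
  "gp_set V E X \<longleftrightarrow> X \<subseteq> V \<and> (\<forall>u\<in>X. \<forall>v\<in>X. positionable V E X u v)"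

(* for finite graphs *)
definition gp_number :: "'a set \<Rightarrow> ('a \<Rightarrow> 'a \<Rightarrow> bool) \<Rightarrow> nat" where
  "gp_number V E = Max (card ` {X. gp_set V E X})"

definition gp_count :: "'a set \<Rightarrow> ('a \<Rightarrow> 'a \<Rightarrow> bool) \<Rightarrow> nat" where
  "gp_count V E = card {X. gp_set V E X \<and> card X = gp_number V E}"

definition sierp_V :: "nat \<Rightarrow> nat \<Rightarrow> nat list set" where
  "sierp_V p n = {xs. length xs = n \<and> set xs \<subseteq> {..<p}}"

(* positions are 0-based: index h here corresponds to h+1 in the paper *)
definition sierp_E :: "nat \<Rightarrow> nat \<Rightarrow> nat list \<Rightarrow> nat list \<Rightarrow> bool" where
  "sierp_E p n u v \<longleftrightarrow> u \<in> sierp_V p n \<and> v \<in> sierp_V p n \<and>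
     (\<exists>h<n. (\<forall>t<h. u ! t = v ! t) \<and> u ! h \<noteq> v ! h \<and>
            (\<forall>t. h < t \<and> t < n \<longrightarrow> u ! t = v ! h \<and> v ! t = u ! h))"

end

theory Submission
  imports Defs
begin

text \<open>
  Distinct cliques i and k of S_p^2 are joined by the single bridge edge ik -- ki, which gives
  an explicit distance formula. As distances are realised by walks, a set is in general position
  iff none of its points lies metrically between two others. If ij, ik, kl lie in a general
  position set X with i \<noteq> k, then j = k, since ik lies on the geodesic ij, ik, ki, kl. Hence,
  if A is the set of cliques met by X, the part of X in a clique i \<in> A with at least two
  elements avoids A - {i}, and |X| \<le> |A| (p + 1 - |A|) \<le> floor ((p + 1)^2 / 4). Equality forces
  p \<le> 2|A| \<le> p + 2 and X = {ij. i \<in> A, j = i or j \<notin> A}; conversely these sets are in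
  general position because any two of their points are at distance 1 or 3. Counting the
  admissible A gives the binomial coefficients.
\<close>

section \<open>Distances realised by walks\<close>

lemma is_walk_singleton [simp]: "is_walk V E [x] \<longleftrightarrow> x \<in> V"
  by (auto simp: is_walk_def)

lemma is_walk_Cons_Cons [simp]:
  "is_walk V E (x # y # P) \<longleftrightarrow> x \<in> V \<and> E x y \<and> is_walk V E (y # P)"
  by (auto simp: is_walk_def less_Suc_eq_0_disj)

lemma is_walk_append_iff:
  "is_walk V E (P @ x # Q) \<longleftrightarrow> is_walk V E (P @ [x]) \<and> is_walk V E (x # Q)"
proof (induction P)
  case (Cons y P)
  then show ?case by (cases P) auto
qed (auto simp: is_walk_def)

lemma is_uv_walk_endpoints: "is_uv_walk V E u v P \<Longrightarrow> u \<in> V \<and> v \<in> V"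
  unfolding is_uv_walk_def is_walk_def by (metis hd_in_set last_in_set subsetD)

lemma is_uv_walk_append_iff:
  "is_uv_walk V E u v (P @ w # Q) \<longleftrightarrow> is_uv_walk V E u w (P @ [w]) \<and> is_uv_walk V E w v (w # Q)"
proof -
  have "hd (P @ w # Q) = hd (P @ [w])"
    by (cases P) simp_all
  then show ?thesis
    unfolding is_uv_walk_def by (subst is_walk_append_iff) auto
qed

lemma is_uv_walk_snocE:
  assumes "is_uv_walk V E u v P"
  obtains P' where "P = P' @ [v]"
proof
  have "P \<noteq> []" "last P = v"
    using assms by (simp_all add: is_uv_walk_def is_walk_def)
  then show "P = butlast P @ [v]"
    by (metis append_butlast_last_id)
qed

lemma is_uv_walk_ConsE:
  assumes "is_uv_walk V E u v P"
  obtains P' where "P = u # P'"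
proof
  have "P \<noteq> []" "hd P = u"
    using assms by (simp_all add: is_uv_walk_def is_walk_def)
  then show "P = u # tl P"
    by (metis list.collapse)
qed

lemma positionable_iff:
  "positionable V E X u v \<longleftrightarrow>
     (\<forall>w\<in>X. (\<exists>P. is_shortest_path V E u v P \<and> w \<in> set P) \<longrightarrow> w = u \<or> w = v)"
  unfolding positionable_def by blast

text \<open>A walk lists its vertices, so a geodesic from u to v has Suc (d u v) entries.\<close>

locale graph_distance =
  fixes V :: "'a set" and E :: "'a \<Rightarrow> 'a \<Rightarrow> bool" and d :: "'a \<Rightarrow> 'a \<Rightarrow> nat"
  assumes dist_self: "u \<in> V \<Longrightarrow> d u u = 0"
    and dist_edge: "E u v \<Longrightarrow> w \<in> V \<Longrightarrow> d u w \<le> Suc (d v w)"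
    and geodesic_exists: "u \<in> V \<Longrightarrow> v \<in> V \<Longrightarrow> \<exists>P. is_uv_walk V E u v P \<and> length P = Suc (d u v)"
begin

lemma dist_less_walk_length: "is_walk V E P \<Longrightarrow> d (hd P) (last P) < length P"
proof (induction P rule: induct_list012)
  case (3 x y P)
  then have edge: "E x y" and walk: "is_walk V E (y # P)"
    by simp_all
  then have "last (y # P) \<in> V"
    unfolding is_walk_def using last_in_set by blast
  with edge have "d x (last (y # P)) \<le> Suc (d y (last (y # P)))"
    by (rule dist_edge)
  moreover have "d y (last (y # P)) < length (y # P)"
    using "3.IH" walk by simp
  ultimately show ?case
    by simp
qed (simp_all add: dist_self is_walk_def)

lemma shortest_path_iff:
  "is_shortest_path V E u v P \<longleftrightarrow> is_uv_walk V E u v P \<and> length P = Suc (d u v)"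
proof
  assume P: "is_shortest_path V E u v P"
  then have walk: "is_uv_walk V E u v P"
    by (simp add: is_shortest_path_def)
  then have "u \<in> V" "v \<in> V"
    by (simp_all add: is_uv_walk_endpoints)
  then obtain Q where "is_uv_walk V E u v Q" "length Q = Suc (d u v)"
    using geodesic_exists by blast
  with P have "length P \<le> Suc (d u v)"
    by (metis is_shortest_path_def)
  moreover have "d u v < length P"
    using walk dist_less_walk_length by (auto simp: is_uv_walk_def)
  ultimately show "is_uv_walk V E u v P \<and> length P = Suc (d u v)"
    using walk by simp
next
  assume P: "is_uv_walk V E u v P \<and> length P = Suc (d u v)"
  have "length P \<le> length Q" if "is_uv_walk V E u v Q" for Q
    using dist_less_walk_length[of Q] that P by (simp add: is_uv_walk_def)
  with P show "is_shortest_path V E u v P"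
    by (simp add: is_shortest_path_def)
qed

lemma geodesic_through:
  assumes "u \<in> V" "w \<in> V" "v \<in> V"
  obtains R where "is_uv_walk V E u v R" "w \<in> set R" "length R = Suc (d u w + d w v)"
proof -
  obtain P Q where P: "is_uv_walk V E u w P" "length P = Suc (d u w)"
    and Q: "is_uv_walk V E w v Q" "length Q = Suc (d w v)"
    using geodesic_exists assms by meson
  obtain P' where "P = P' @ [w]"
    using P(1) by (rule is_uv_walk_snocE)
  obtain Q' where "Q = w # Q'"
    using Q(1) by (rule is_uv_walk_ConsE)
  with P(1) Q(1) \<open>P = P' @ [w]\<close> have "is_uv_walk V E u v (P' @ w # Q')"
    using is_uv_walk_append_iff[of V E u v P' w Q'] by simp
  moreover have "length (P' @ w # Q') = Suc (d u w + d w v)"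
    using P(2) Q(2) \<open>P = P' @ [w]\<close> \<open>Q = w # Q'\<close> by simp
  ultimately show ?thesis
    using that by simp
qed

lemma dist_triangle:
  assumes "u \<in> V" "w \<in> V" "v \<in> V"
  shows "d u v \<le> d u w + d w v"
proof -
  obtain R where "is_uv_walk V E u v R" "length R = Suc (d u w + d w v)"
    using geodesic_through[OF assms] by blast
  then show ?thesis
    using dist_less_walk_length[of R] by (simp add: is_uv_walk_def)
qed

lemma on_shortest_path_iff:
  "(\<exists>P. is_shortest_path V E u v P \<and> w \<in> set P) \<longleftrightarrow>
     u \<in> V \<and> w \<in> V \<and> v \<in> V \<and> d u w + d w v = d u v"
proof
  assume "\<exists>P. is_shortest_path V E u v P \<and> w \<in> set P"
  then obtain R where R: "is_shortest_path V E u v R" "w \<in> set R"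
    by blast
  then obtain P Q where "R = P @ w # Q"
    by (meson split_list)
  with R(1) have walk: "is_uv_walk V E u v (P @ w # Q)" and len: "length (P @ w # Q) = Suc (d u v)"
    by (simp_all add: shortest_path_iff)
  then have first: "is_uv_walk V E u w (P @ [w])" and second: "is_uv_walk V E w v (w # Q)"
    using is_uv_walk_append_iff[of V E u v P w Q] by simp_all
  have dists: "d u w < length (P @ [w])" "d w v < length (w # Q)"
    using dist_less_walk_length[of "P @ [w]"] dist_less_walk_length[of "w # Q"] first second
    by (auto simp: is_uv_walk_def)
  have in_V: "u \<in> V" "w \<in> V" "v \<in> V"
    using is_uv_walk_endpoints[OF first] is_uv_walk_endpoints[OF second] by simp_all
  with dists len dist_triangle[OF in_V] show "u \<in> V \<and> w \<in> V \<and> v \<in> V \<and> d u w + d w v = d u v"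
    by simp
next
  assume "u \<in> V \<and> w \<in> V \<and> v \<in> V \<and> d u w + d w v = d u v"
  then have in_V: "u \<in> V" "w \<in> V" "v \<in> V" and between: "d u w + d w v = d u v"
    by simp_all
  obtain R where "is_uv_walk V E u v R" "w \<in> set R" "length R = Suc (d u w + d w v)"
    using in_V by (rule geodesic_through)
  with between show "\<exists>P. is_shortest_path V E u v P \<and> w \<in> set P"
    by (auto simp: shortest_path_iff)
qed

lemma gp_set_iff_no_betweenness:
  "gp_set V E X \<longleftrightarrow>
     X \<subseteq> V \<and> (\<forall>u\<in>X. \<forall>v\<in>X. \<forall>w\<in>X. d u w + d w v = d u v \<longrightarrow> w = u \<or> w = v)"
proof (cases "X \<subseteq> V")
  case True
  then have "positionable V E X u v \<longleftrightarrow> (\<forall>w\<in>X. d u w + d w v = d u v \<longrightarrow> w = u \<or> w = v)"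
    if "u \<in> X" "v \<in> X" for u v
    using that by (auto simp: positionable_iff on_shortest_path_iff)
  with True show ?thesis
    by (simp add: gp_set_def)
qed (simp add: gp_set_def)

end

section \<open>The Sierpinski graph S_p^2\<close>

lemma finite_sierp_V: "finite (sierp_V p n)"
  using finite_lists_length_eq[of "{..<p}" n] by (simp add: sierp_V_def conj_commute)

lemma sierp2_Cons_Cons_in_V_iff [simp]: "[i, j] \<in> sierp_V p 2 \<longleftrightarrow> i < p \<and> j < p"
  by (auto simp: sierp_V_def)

lemma sierp2_VE:
  assumes "u \<in> sierp_V p 2"
  obtains i j where "u = [i, j]" "i < p" "j < p"
proof -
  have "length u = 2" "set u \<subseteq> {..<p}"
    using assms by (simp_all add: sierp_V_def)
  then obtain i j where "u = [i, j]"
    by (metis One_nat_def Suc_1 length_0_conv length_Suc_conv)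
  with \<open>set u \<subseteq> {..<p}\<close> show ?thesis
    using that by simp
qed

lemma sierp2_E_iff:
  "sierp_E p 2 [i, j] [k, l] \<longleftrightarrow>
     i < p \<and> j < p \<and> k < p \<and> l < p \<and> (i = k \<and> j \<noteq> l \<or> i \<noteq> k \<and> j = k \<and> l = i)"
proof -
  have two: "(\<exists>h<2. P h) \<longleftrightarrow> P 0 \<or> P (1::nat)" for P
    by (auto simp: numeral_2_eq_2 less_Suc_eq)
  have after_0: "(\<forall>t. 0 < t \<and> t < 2 \<longrightarrow> Q t) \<longleftrightarrow> Q (1::nat)" for Q
    by (auto simp: numeral_2_eq_2 less_Suc_eq)
  have after_1: "\<forall>t. 1 < t \<and> t < 2 \<longrightarrow> Q (t::nat)" for Q
    by auto
  show ?thesis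
    unfolding sierp_E_def two after_0 using after_1 by auto
qed

text \<open>Every path from clique i to a different clique k crosses the bridge [i, k] -- [k, i].\<close>

fun sierp2_dist :: "nat list \<Rightarrow> nat list \<Rightarrow> nat" where
  "sierp2_dist [i, j] [k, l] =
     (if i = k then of_bool (j \<noteq> l) else of_bool (j \<noteq> k) + 1 + of_bool (l \<noteq> i))"
| "sierp2_dist _ _ = 0"

interpretation sierp2: graph_distance "sierp_V p 2" "sierp_E p 2" sierp2_dist for p
proof
  fix u
  assume "u \<in> sierp_V p 2"
  then show "sierp2_dist u u = 0"
    by (elim sierp2_VE) simp
next
  fix u v w
  assume uv: "sierp_E p 2 u v" and "w \<in> sierp_V p 2"
  moreover from uv have "u \<in> sierp_V p 2" "v \<in> sierp_V p 2"
    by (simp_all add: sierp_E_def)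
  ultimately obtain i j k l m n where "u = [i, j]" "v = [k, l]" "w = [m, n]"
    and "sierp_E p 2 [i, j] [k, l]"
    by (metis sierp2_VE)
  then show "sierp2_dist u w \<le> Suc (sierp2_dist v w)"
    by (auto simp: sierp2_E_iff)
next
  fix u v
  assume "u \<in> sierp_V p 2" "v \<in> sierp_V p 2"
  then obtain i j k l where uv: "u = [i, j]" "v = [k, l]" "i < p" "j < p" "k < p" "l < p"
    by (metis sierp2_VE)
  define W where "W = (if i = k then (if j = l then [] else [[i, j]]) @ [[k, l]]
    else (if j = k then [] else [[i, j]]) @ [[i, k], [k, i]] @ (if l = i then [] else [[k, l]]))"
  have "is_uv_walk (sierp_V p 2) (sierp_E p 2) u v W \<and> length W = Suc (sierp2_dist u v)"
    using uv by (cases "i = k"; cases "j = l"; cases "j = k"; cases "l = i")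
      (simp_all add: W_def is_uv_walk_def sierp2_E_iff)
  then show "\<exists>P. is_uv_walk (sierp_V p 2) (sierp_E p 2) u v P \<and> length P = Suc (sierp2_dist u v)"
    by blast
qed

section \<open>General position sets of S_p^2\<close>

definition extremal_gp_set :: "nat \<Rightarrow> nat set \<Rightarrow> nat list set" where
  "extremal_gp_set p A = (\<lambda>(i, j). [i, j]) ` (SIGMA i:A. insert i ({..<p} - A))"

lemma inj_on_pair_list: "inj_on (\<lambda>(i, j). [i, j]) S"
  by (auto simp: inj_on_def)

lemma mem_extremal_gp_set_iff [simp]:
  "[i, j] \<in> extremal_gp_set p A \<longleftrightarrow> i \<in> A \<and> (j = i \<or> j < p \<and> j \<notin> A)"
  by (auto simp: extremal_gp_set_def)

lemma extremal_gp_set_subset: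
  "A \<subseteq> {..<p} \<Longrightarrow> extremal_gp_set p A \<subseteq> sierp_V p 2"
  by (auto simp: extremal_gp_set_def)

lemma card_insert_complement:
  assumes "A \<subseteq> {..<p}" "i \<in> A"
  shows "card (insert i ({..<p} - A)) = p + 1 - card A"
  using assms finite_subset[OF assms(1)] card_mono[OF _ assms(1)] by (simp add: card_Diff_subset)

lemma card_extremal_gp_set:
  assumes "A \<subseteq> {..<p}"
  shows "card (extremal_gp_set p A) = card A * (p + 1 - card A)"
  using assms finite_subset[OF assms] card_insert_complement[OF assms]
  unfolding extremal_gp_set_def by (simp add: card_image[OF inj_on_pair_list])

lemma inj_on_extremal_gp_set: "inj_on (extremal_gp_set p) (Pow {..<p})"
proof (rule inj_onI)
  fix A B
  assume "A \<in> Pow {..<p}" "B \<in> Pow {..<p}" "extremal_gp_set p A = extremal_gp_set p B"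
  then have "[i, i] \<in> extremal_gp_set p A \<longleftrightarrow> [i, i] \<in> extremal_gp_set p B" for i
    by simp
  then show "A = B"
    by auto
qed

text \<open>Neither end of the bridge between two cliques of A belongs to the set.\<close>

lemma sierp2_dist_extremal_gp_set:
  assumes "u \<in> extremal_gp_set p A" "v \<in> extremal_gp_set p A" "u \<noteq> v"
  shows "sierp2_dist u v = (if hd u = hd v then 1 else 3)"
  using assms by (auto simp: extremal_gp_set_def of_bool_def split: if_splits)

lemma gp_set_extremal_gp_set:
  assumes "A \<subseteq> {..<p}"
  shows "gp_set (sierp_V p 2) (sierp_E p 2) (extremal_gp_set p A)"
  unfolding sierp2.gp_set_iff_no_betweenness
proof (intro conjI ballI impI extremal_gp_set_subset[OF assms])
  fix u v w
  assume u: "u \<in> extremal_gp_set p A" and v: "v \<in> extremal_gp_set p A"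
    and w: "w \<in> extremal_gp_set p A"
    and between: "sierp2_dist u w + sierp2_dist w v = sierp2_dist u v"
  show "w = u \<or> w = v"
  proof (rule ccontr)
    assume "\<not> (w = u \<or> w = v)"
    then have "sierp2_dist u w \<in> {1, 3}" "sierp2_dist w v \<in> {1, 3}"
      using sierp2_dist_extremal_gp_set[OF u w] sierp2_dist_extremal_gp_set[OF w v]
      by (auto split: if_splits)
    moreover have "sierp2_dist u v \<in> {0, 1, 3}"
      using sierp2_dist_extremal_gp_set[OF u v] sierp2.dist_self extremal_gp_set_subset[OF assms] u
      by (cases "u = v") (auto split: if_splits)
    ultimately show False
      using between by auto
  qed
qed

definition clique_part :: "nat list set \<Rightarrow> nat \<Rightarrow> nat set" where
  "clique_part X i = {j. [i, j] \<in> X}"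

definition occupied_cliques :: "nat list set \<Rightarrow> nat set" where
  "occupied_cliques X = {i. clique_part X i \<noteq> {}}"

lemma occupied_cliques_subset: "X \<subseteq> sierp_V p 2 \<Longrightarrow> occupied_cliques X \<subseteq> {..<p}"
  by (auto simp: occupied_cliques_def clique_part_def)

lemma clique_part_subset: "X \<subseteq> sierp_V p 2 \<Longrightarrow> clique_part X i \<subseteq> {..<p}"
  by (auto simp: clique_part_def)

lemma sierp2_set_eq_Sigma:
  assumes "X \<subseteq> sierp_V p 2"
  shows "X = (\<lambda>(i, j). [i, j]) ` (SIGMA i:occupied_cliques X. clique_part X i)"
proof
  show "X \<subseteq> (\<lambda>(i, j). [i, j]) ` (SIGMA i:occupied_cliques X. clique_part X i)"
  proof
    fix u
    assume "u \<in> X"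
    with assms obtain i j where "u = [i, j]"
      by (blast elim: sierp2_VE)
    with \<open>u \<in> X\<close> show "u \<in> (\<lambda>(i, j). [i, j]) ` (SIGMA i:occupied_cliques X. clique_part X i)"
      by (auto simp: occupied_cliques_def clique_part_def)
  qed
qed (auto simp: occupied_cliques_def clique_part_def)

lemma card_eq_sum_clique_parts:
  assumes "X \<subseteq> sierp_V p 2"
  shows "card X = (\<Sum>i\<in>occupied_cliques X. card (clique_part X i))"
proof -
  have "finite (occupied_cliques X)" "\<And>i. finite (clique_part X i)"
    using occupied_cliques_subset[OF assms] clique_part_subset[OF assms] finite_subset by blast+
  then show ?thesis
    by (subst sierp2_set_eq_Sigma[OF assms]) (simp add: card_image[OF inj_on_pair_list])
qed

lemma gp_set_bridge:
  assumes "gp_set (sierp_V p 2) (sierp_E p 2) X"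
    and "[i, j] \<in> X" "[i, k] \<in> X" "[k, l] \<in> X" "i \<noteq> k"
  shows "j = k"
proof (rule ccontr)
  assume "j \<noteq> k"
  \<comment> \<open>then [i, k] lies on the geodesic [i, j], [i, k], [k, i], [k, l]\<close>
  then have "sierp2_dist [i, j] [i, k] + sierp2_dist [i, k] [k, l] = sierp2_dist [i, j] [k, l]"
    using \<open>i \<noteq> k\<close> by simp
  with assms have "[i, k] = [i, j] \<or> [i, k] = [k, l]"
    unfolding sierp2.gp_set_iff_no_betweenness by blast
  with \<open>j \<noteq> k\<close> \<open>i \<noteq> k\<close> show False
    by simp
qed

lemma clique_part_subset_complement:
  assumes gp: "gp_set (sierp_V p 2) (sierp_E p 2) X" and two: "2 \<le> card (clique_part X i)"
  shows "clique_part X i \<subseteq> insert i ({..<p} - occupied_cliques X)"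
proof
  fix j
  assume j: "j \<in> clique_part X i"
  have X: "X \<subseteq> sierp_V p 2"
    using gp by (simp add: gp_set_def)
  show "j \<in> insert i ({..<p} - occupied_cliques X)"
  proof (rule ccontr)
    assume "j \<notin> insert i ({..<p} - occupied_cliques X)"
    with j clique_part_subset[OF X] have "j \<noteq> i" "j \<in> occupied_cliques X"
      by auto
    then obtain l where "[j, l] \<in> X"
      by (auto simp: occupied_cliques_def clique_part_def)
    with j \<open>j \<noteq> i\<close> have "clique_part X i \<subseteq> {j}"
      using gp_set_bridge[OF gp] by (auto simp: clique_part_def)
    with two show False
      using card_mono[of "{j}" "clique_part X i"] by simp
  qed
qed

lemma card_clique_part_le:
  assumes gp: "gp_set (sierp_V p 2) (sierp_E p 2) X" and i: "i \<in> occupied_cliques X"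
  shows "card (clique_part X i) \<le> p + 1 - card (occupied_cliques X)"
proof -
  have X: "X \<subseteq> sierp_V p 2"
    using gp by (simp add: gp_set_def)
  show ?thesis
  proof (cases "2 \<le> card (clique_part X i)")
    case True
    then have "card (clique_part X i) \<le> card (insert i ({..<p} - occupied_cliques X))"
      using clique_part_subset_complement[OF gp] by (intro card_mono) auto
    then show ?thesis
      using card_insert_complement[OF occupied_cliques_subset[OF X] i] by simp
  next
    case False
    then show ?thesis
      using card_mono[OF _ occupied_cliques_subset[OF X]] by simp
  qed
qed

lemma card_gp_set_le_occupied:
  assumes gp: "gp_set (sierp_V p 2) (sierp_E p 2) X"
  shows "card X \<le> card (occupied_cliques X) * (p + 1 - card (occupied_cliques X))"
proof -
  have "X \<subseteq> sierp_V p 2"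
    using gp by (simp add: gp_set_def)
  then show ?thesis
    using card_eq_sum_clique_parts sum_bounded_above[OF card_clique_part_le[OF gp]] by simp
qed

lemma gp_set_eq_extremal_gp_set:
  assumes gp: "gp_set (sierp_V p 2) (sierp_E p 2) X"
    and card_eq: "card X = card (occupied_cliques X) * (p + 1 - card (occupied_cliques X))"
    and two: "2 \<le> p + 1 - card (occupied_cliques X)"
  shows "X = extremal_gp_set p (occupied_cliques X)"
proof -
  let ?A = "occupied_cliques X"
  have X: "X \<subseteq> sierp_V p 2"
    using gp by (simp add: gp_set_def)
  have "finite ?A"
    using occupied_cliques_subset[OF X] finite_subset by blast
  have "card (clique_part X i) = p + 1 - card ?A" if "i \<in> ?A" for i
  proof (rule sum_mono_inv[OF _ _ that \<open>finite ?A\<close>])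
    show "(\<Sum>i\<in>?A. card (clique_part X i)) = (\<Sum>i\<in>?A. p + 1 - card ?A)"
      using card_eq card_eq_sum_clique_parts[OF X] by simp
  qed (rule card_clique_part_le[OF gp])
  then have "clique_part X i = insert i ({..<p} - ?A)" if "i \<in> ?A" for i
    using that two clique_part_subset_complement[OF gp]
      card_insert_complement[OF occupied_cliques_subset[OF X]]
    by (intro card_subset_eq) auto
  then show ?thesis
    unfolding extremal_gp_set_def by (subst sierp2_set_eq_Sigma[OF X]) (simp cong: Sigma_cong)
qed

lemma mult_diff_le_square_div_4:
  fixes a n :: nat
  assumes "a \<le> n"
  shows "a * (n - a) \<le> n^2 div 4 \<and> (a * (n - a) = n^2 div 4 \<longleftrightarrow> n \<le> 2 * a + 1 \<and> 2 * a \<le> n + 1)"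
proof -
  define q r where "q = n div 2" and "r = n mod 2"
  then have n: "n = 2 * q + r" and r: "r = 0 \<or> r = 1"
    by auto
  define x where "x = int a - int q"
  have square: "n^2 = 4 * (q * q + q * r) + r"
    using r unfolding n by (auto simp: power2_eq_square algebra_simps)
  have "(4 * k + r) div 4 = k" for k
    using r by auto
  then have "n^2 div 4 = q * q + q * r"
    by (simp only: square)
  then have "int (n^2 div 4) = int q * int q + int q * int r"
    by simp
  moreover have "int (a * (n - a)) = int a * (2 * int q + int r - int a)"
    using assms unfolding n by simp
  ultimately have "int (a * (n - a)) = int (n^2 div 4) - x * (x - int r)"
    unfolding x_def by (simp add: algebra_simps)
  moreover have "x * (x - int r) \<ge> 0"
    using r by (cases "x \<le> 0") (auto simp: mult_nonpos_nonpos)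
  moreover have "x * (x - int r) = 0 \<longleftrightarrow> n \<le> 2 * a + 1 \<and> 2 * a \<le> n + 1"
    using r unfolding n x_def by auto
  ultimately show ?thesis
    by linarith
qed

definition balanced_subsets :: "nat \<Rightarrow> nat set set" where
  "balanced_subsets p = {A. A \<subseteq> {..<p} \<and> p \<le> 2 * card A \<and> 2 * card A \<le> p + 2}"

lemma card_balanced_subsets:
  "card (balanced_subsets p) =
     (if odd p then p choose ((p + 1) div 2) else (p + 1) choose ((p + 2) div 2))"
proof (cases "odd p")
  case True
  then have "balanced_subsets p = {A. A \<subseteq> {..<p} \<and> card A = (p + 1) div 2}"
    unfolding balanced_subsets_def by (auto elim!: oddE)
  with True show ?thesis
    by (simp add: n_subsets)
next
  case False
  then obtain q where q: "p = 2 * q"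
    by blast
  then have "balanced_subsets p =
      {A. A \<subseteq> {..<p} \<and> card A = q} \<union> {A. A \<subseteq> {..<p} \<and> card A = Suc q}"
    unfolding balanced_subsets_def by auto
  moreover have "card ({A. A \<subseteq> {..<p} \<and> card A = q} \<union> {A. A \<subseteq> {..<p} \<and> card A = Suc q}) =
      (p choose q) + (p choose Suc q)"
    by (subst card_Un_disjoint) (auto simp: n_subsets intro: finite_subset[of _ "Pow {..<p}"])
  ultimately show ?thesis
    using q by simp
qed

lemma card_gp_set_le_square_div_4:
  assumes "gp_set (sierp_V p 2) (sierp_E p 2) X"
  shows "card X \<le> (p + 1)^2 div 4"
proof -
  have "card (occupied_cliques X) \<le> p + 1"
    using assms card_mono[OF _ occupied_cliques_subset] by (force simp: gp_set_def)
  then show ?thesis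
    using card_gp_set_le_occupied[OF assms] mult_diff_le_square_div_4 order_trans by blast
qed

text \<open>
  The hypothesis 3 \<le> p makes the clique parts of the extremal sets have at least two
  elements; in the path S_2^2 every pair of vertices is a maximum general position set.
\<close>

lemma maximum_gp_sets_sierp2:
  assumes "3 \<le> p"
  shows "{X. gp_set (sierp_V p 2) (sierp_E p 2) X \<and> card X = (p + 1)^2 div 4} =
           extremal_gp_set p ` balanced_subsets p"
proof (intro equalityI subsetI)
  fix X
  assume "X \<in> {X. gp_set (sierp_V p 2) (sierp_E p 2) X \<and> card X = (p + 1)^2 div 4}"
  then have gp: "gp_set (sierp_V p 2) (sierp_E p 2) X" and card_X: "card X = (p + 1)^2 div 4"
    by simp_all
  let ?A = "occupied_cliques X"
  have A: "?A \<subseteq> {..<p}"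
    using gp occupied_cliques_subset by (simp add: gp_set_def)
  then have "card ?A \<le> p + 1"
    using card_mono[OF _ A] by simp
  then have "card ?A * (p + 1 - card ?A) \<le> card X"
    and balanced: "p \<le> 2 * card ?A \<and> 2 * card ?A \<le> p + 2"
    using card_gp_set_le_occupied[OF gp] card_X mult_diff_le_square_div_4[of "card ?A" "p + 1"] by auto
  then have "X = extremal_gp_set p ?A"
    using assms card_gp_set_le_occupied[OF gp] by (intro gp_set_eq_extremal_gp_set[OF gp]) auto
  with A balanced show "X \<in> extremal_gp_set p ` balanced_subsets p"
    by (auto simp: balanced_subsets_def)
next
  fix X
  assume "X \<in> extremal_gp_set p ` balanced_subsets p"
  then obtain A where A: "A \<subseteq> {..<p}" "p \<le> 2 * card A" "2 * card A \<le> p + 2"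
    and X: "X = extremal_gp_set p A"
    by (auto simp: balanced_subsets_def)
  have "card A \<le> p + 1"
    using card_mono[OF _ A(1)] by simp
  then show "X \<in> {X. gp_set (sierp_V p 2) (sierp_E p 2) X \<and> card X = (p + 1)^2 div 4}"
    using X A gp_set_extremal_gp_set card_extremal_gp_set
      mult_diff_le_square_div_4[of "card A" "p + 1"]
    by auto
qed

lemma gp_number_sierp2: "gp_number (sierp_V p 2) (sierp_E p 2) = (p + 1)^2 div 4"
  unfolding gp_number_def
proof (rule Max_eqI)
  have "{X. gp_set (sierp_V p 2) (sierp_E p 2) X} \<subseteq> Pow (sierp_V p 2)"
    by (auto simp: gp_set_def)
  then show "finite (card ` {X. gp_set (sierp_V p 2) (sierp_E p 2) X})"
    using finite_sierp_V finite_subset by blast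
  show "k \<le> (p + 1)^2 div 4" if "k \<in> card ` {X. gp_set (sierp_V p 2) (sierp_E p 2) X}" for k
    using that card_gp_set_le_square_div_4 by blast
  define A where "A = {..<(p + 1) div 2}"
  have "A \<subseteq> {..<p}" "p \<le> 2 * card A" "2 * card A \<le> p + 2"
    unfolding A_def by auto
  then show "(p + 1)^2 div 4 \<in> card ` {X. gp_set (sierp_V p 2) (sierp_E p 2) X}"
    using gp_set_extremal_gp_set card_extremal_gp_set mult_diff_le_square_div_4[of "card A" "p + 1"]
    by (intro image_eqI[of _ _ "extremal_gp_set p A"]) auto
qed

lemma gp_count_sierp2:
  assumes "3 \<le> p"
  shows "gp_count (sierp_V p 2) (sierp_E p 2) = card (balanced_subsets p)"
proof -
  have "inj_on (extremal_gp_set p) (balanced_subsets p)"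
    using inj_on_extremal_gp_set by (rule inj_on_subset) (auto simp: balanced_subsets_def)
  then show ?thesis
    unfolding gp_count_def gp_number_sierp2 maximum_gp_sets_sierp2[OF assms]
    by (rule card_image)
qed

theorem corollary3p2:
  fixes p :: nat
  assumes "p \<ge> 3"
  shows "gp_number (sierp_V p 2) (sierp_E p 2) =
           (if odd p then (p + 1)^2 div 4 else p * (p + 2) div 4)
       \<and> gp_count (sierp_V p 2) (sierp_E p 2) =
           (if odd p then p choose ((p + 1) div 2) else (p + 1) choose ((p + 2) div 2))"
proof -
  have "p * (p + 2) div 4 = (p + 1)^2 div 4" if "even p"
  proof -
    from that obtain q where "p = 2 * q"
      by blast
    then show ?thesis
      by (simp add: power2_eq_square algebra_simps)
  qed
  then show ?thesis
    using gp_number_sierp2 gp_count_sierp2[OF assms] card_balanced_subsets by simp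
qed

end
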